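(* The doctrine $\mathrm{Ssb}_{\mathbf{Asm}}:\mathbf{Asm}^{op}\to\mathbf{InfSL}$ of strong subobjects on $\mathbf{Asm}$ is (equivalent to) the elementary quotient completion $\overline{\mathbb P\Gamma}:\mathcal Q_{\mathbb P\Gamma}^{op}\to\mathbf{InfSL}$ of the doctrine $\mathbb P\Gamma:\mathbf{PAsm}^{op}\to\mathbf{InfSL}$; in particular $\mathcal Q_{\mathbb P\Gamma}\simeq\mathbf{Asm}$.
   Context: Write $\varphi_e$ for the $e$-th partial recursive function. An assembly is a pair $(P,T)$ with $P$ a set and $T\subseteq P\times\mathbb N$ a total relation (every $x\in P$ has some $n$ with $x\,T\,n$). A morphism $f:(P,T)\to(P',T')$ is a function $f:P\to P'$ for which some $t\in\mathbb N$ tracks $f$: whenever $x\,T\,n$, $\varphi_t(n)$ is defined and $f(x)\,T'\,\varphi_t(n)$. These form the category $\mathbf{Asm}$. An assembly is partitioned if $T$ is a function $P\to\mathbb N$; $\mathbf{PAsm}$ is the full subcategory of partitioned assemblies. A strong subobject of $(P,T)$ in $\mathbf{Asm}$ is (up to iso) an inclusion $(X,T\cap(X\times\mathbb N))\hookrightarrow(P,T)$ for a subset $X\subseteq P$; $\mathrm{Ssb}_{\mathbf{Asm}}$ sends an assembly to its poset of strong subobjects, reindexing by pullback. $\mathbb P\Gamma:\mathbf{PAsm}^{op}\to\mathbf{InfSL}$ sends $(P,T)$ to the powerset of $P$ and an arrow $f$ to inverse image along $f$; its equality predicate on $A$ is the diagonal subset. Elementary doctrines: for $\mathcal C$ with finite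 products, an elementary doctrine is a functor $P:\mathcal C^{op}\to\mathbf{InfSL}$ (write $P_f$ for $P(f)$) such that for every object $A$ there is $\delta_A\in P(A\times A)$ with the property that for every $X$ the map $\alpha\mapsto P_{\langle pr_1,pr_2\rangle}(\alpha)\wedge P_{\langle pr_2,pr_3\rangle}(\delta_A)$, $P(X\times A)\to P(X\times A\times A)$, is left adjoint to $P_{\langle pr_1,pr_2,pr_2\rangle}$. We write $a:A\mid\phi\vdash\psi$ for $\phi\le\psi$ in $P(A)$ and $a=_Aa'$ for $\delta_A$. A $P$-equivalence relation on $A$ is $\rho\in P(A\times A)$ that is reflexive ($a=_Aa'\vdash\rho(a,a')$), symmetric and transitive. The elementary quotient completion $\overline P:\mathcal Q_P^{op}\to\mathbf{InfSL}$ has as objects pairs $(A,\rho)$ with $\rho$ a $P$-equivalence relation on $A$; an arrow $(A,\rho)\to(B,\sigma)$ is an equivalence class of arrows $f:A\to B$ of $\mathcal C$ with $\rho(a,a')\vdash\sigma(f(a),f(a'))$, where $f\sim g$ iff $\rho(a,a')\vdash\sigma(f(a),g(a'))$; composition is on representatives; $\overline P(A,\rho)$ is the sub-poset of $P(A)$ of those $\alpha$ with $\alpha(a)\wedge\rho(a,a')\vdash\alpha(a')$, with reindexing as in $P$. *)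

theory Defs
  imports Main "HOL-Library.Countable"
begin

datatype recf = Zero | Succ | Proj nat | Comp recf "recf list" | Prim recf recf | Mu recf

instance recf :: countable by countable_datatype

inductive evalr :: "recf \<Rightarrow> nat list \<Rightarrow> nat \<Rightarrow> bool" where
  ev_zero: "evalr Zero xs 0"
| ev_succ: "evalr Succ (x # xs) (Suc x)"
| ev_proj: "i < length xs \<Longrightarrow> evalr (Proj i) xs (xs ! i)"
| ev_comp: "length ys = length gs \<Longrightarrow> (\<forall>i < length gs. evalr (gs ! i) xs (ys ! i))
            \<Longrightarrow> evalr f ys z \<Longrightarrow> evalr (Comp f gs) xs z"
| ev_prim0: "evalr f xs y \<Longrightarrow> evalr (Prim f g) (0 # xs) y"
| ev_primS: "evalr (Prim f g) (n # xs) y \<Longrightarrow> evalr g (n # y # xs) z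
            \<Longrightarrow> evalr (Prim f g) (Suc n # xs) z"
| ev_mu: "evalr f (n # xs) 0 \<Longrightarrow> (\<forall>m < n. \<exists>k. evalr f (m # xs) (Suc k))
            \<Longrightarrow> evalr (Mu f) xs n"

definition phi :: "nat \<Rightarrow> nat \<Rightarrow> nat option" where
  "phi e n = (if \<exists>m. evalr (from_nat e) [n] m then Some (THE m. evalr (from_nat e) [n] m) else None)"

type_synonym 'a asm = "'a set \<times> ('a \<times> nat) set"

definition is_asm :: "'a asm \<Rightarrow> bool" where
  "is_asm A \<longleftrightarrow> snd A \<subseteq> fst A \<times> UNIV \<and> (\<forall>x\<in>fst A. \<exists>n. (x, n) \<in> snd A)"

definition tracks :: "'a asm \<Rightarrow> 'b asm \<Rightarrow> ('a \<Rightarrow> 'b) \<Rightarrow> nat \<Rightarrow> bool" where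
  "tracks A B f t \<longleftrightarrow> (\<forall>x n. (x, n) \<in> snd A \<longrightarrow> (\<exists>m. phi t n = Some m \<and> (f x, m) \<in> snd B))"

definition asm_hom :: "'a asm \<Rightarrow> 'b asm \<Rightarrow> ('a \<Rightarrow> 'b) \<Rightarrow> bool" where
  "asm_hom A B f \<longleftrightarrow> (\<forall>x\<in>fst A. f x \<in> fst B) \<and> (\<exists>t. tracks A B f t)"

text \<open>Equality of morphisms out of A (functions matter only on the carrier).\<close>
definition hom_eq :: "'a asm \<Rightarrow> ('a \<Rightarrow> 'b) \<Rightarrow> ('a \<Rightarrow> 'b) \<Rightarrow> bool" where
  "hom_eq A f g \<longleftrightarrow> (\<forall>x\<in>fst A. f x = g x)"

definition is_pasm :: "'a asm \<Rightarrow> bool" where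
  "is_pasm A \<longleftrightarrow> is_asm A \<and> (\<forall>x\<in>fst A. \<exists>!n. (x, n) \<in> snd A)"

definition Ssb :: "'a asm \<Rightarrow> 'a set set" where
  "Ssb A = Pow (fst A)"

definition Ssb_reindex :: "'a asm \<Rightarrow> ('a \<Rightarrow> 'b) \<Rightarrow> 'b set \<Rightarrow> 'a set" where
  "Ssb_reindex A f \<beta> = {x \<in> fst A. f x \<in> \<beta>}"

definition PG :: "'a asm \<Rightarrow> 'a set set" where
  "PG A = Pow (fst A)"

definition PG_reindex :: "'a asm \<Rightarrow> ('a \<Rightarrow> 'b) \<Rightarrow> 'b set \<Rightarrow> 'a set" where
  "PG_reindex A f \<alpha> = {x \<in> fst A. f x \<in> \<alpha>}"

text \<open>P Gamma-equivalence relation on A: an element of PG(A x A) = Pow(P x P) that is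
  reflexive (contains the diagonal), symmetric and transitive.\<close>
definition PG_equiv :: "'a asm \<Rightarrow> ('a \<times> 'a) set \<Rightarrow> bool" where
  "PG_equiv A \<rho> \<longleftrightarrow> \<rho> \<subseteq> fst A \<times> fst A
     \<and> Id_on (fst A) \<subseteq> \<rho>
     \<and> (\<forall>a a'. (a, a') \<in> \<rho> \<longrightarrow> (a', a) \<in> \<rho>)
     \<and> (\<forall>a b c. (a, b) \<in> \<rho> \<and> (b, c) \<in> \<rho> \<longrightarrow> (a, c) \<in> \<rho>)"

type_synonym 'a qobj = "'a asm \<times> ('a \<times> 'a) set"

definition is_Qobj :: "'a qobj \<Rightarrow> bool" where
  "is_Qobj X \<longleftrightarrow> is_pasm (fst X) \<and> PG_equiv (fst X) (snd X)"

text \<open>Representatives of Q-arrows: PAsm morphisms preserving the equivalence relations.\<close>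
definition Q_arrow :: "'a qobj \<Rightarrow> 'b qobj \<Rightarrow> ('a \<Rightarrow> 'b) \<Rightarrow> bool" where
  "Q_arrow X Y f \<longleftrightarrow> asm_hom (fst X) (fst Y) f
     \<and> (\<forall>a a'. (a, a') \<in> snd X \<longrightarrow> (f a, f a') \<in> snd Y)"

definition Q_eq :: "'a qobj \<Rightarrow> 'b qobj \<Rightarrow> ('a \<Rightarrow> 'b) \<Rightarrow> ('a \<Rightarrow> 'b) \<Rightarrow> bool" where
  "Q_eq X Y f g \<longleftrightarrow> (\<forall>a a'. (a, a') \<in> snd X \<longrightarrow> (f a, g a') \<in> snd Y)"

definition Qbar :: "'a qobj \<Rightarrow> 'a set set" where
  "Qbar X = {\<alpha> \<in> PG (fst X). \<forall>a a'. a \<in> \<alpha> \<and> (a, a') \<in> snd X \<longrightarrow> a' \<in> \<alpha>}"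

definition Qbar_reindex :: "'a qobj \<Rightarrow> ('a \<Rightarrow> 'b) \<Rightarrow> 'b set \<Rightarrow> 'a set" where
  "Qbar_reindex X f \<alpha> = PG_reindex (fst X) f \<alpha>"

end

theory Submission
  imports Defs
begin

text \<open>
  The functor sends \<open>(A, \<rho>)\<close> to the assembly of \<open>\<rho>\<close>-classes, each class represented by a chosen
  element and realized by all realizers of its members; arrows act on representatives. Then
  \<open>\<rho>\<close>-saturated subsets of \<open>A\<close> correspond to sets of classes, i.e. to strong subobjects.
  Fullness is where partitionedness enters: a tracker of a map between class assemblies, applied to
  the unique realizer of an element, yields a realizer of some element of the image class, which
  serves as the value of the lifted arrow. An arbitrary assembly \<open>(P, T)\<close> is isomorphic to the
  class assembly of the partitioned assembly on the graph of \<open>T\<close> modulo "same first component";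
  infinitude of the carrier type is what allows that graph to be embedded into it.
\<close>

lemma phi_Proj0: "phi (to_nat (Proj 0)) n = Some n"
proof -
  have "evalr (Proj 0) [n] = (\<lambda>m. m = n)"
    by (auto simp: fun_eq_iff elim: evalr.cases intro: ev_proj[of 0 "[n]", simplified])
  then show ?thesis
    by (simp add: phi_def)
qed

lemma tracks_Proj0:
  assumes "\<And>x n. (x, n) \<in> snd A \<Longrightarrow> (f x, n) \<in> snd B"
  shows "tracks A B f (to_nat (Proj 0))"
  using assms by (simp add: tracks_def phi_Proj0)

subsection \<open>Representatives of equivalence classes\<close>

lemma PG_equiv_iff_equiv: "PG_equiv A \<rho> \<longleftrightarrow> equiv (fst A) \<rho>"
  unfolding PG_equiv_def equiv_def refl_on_def sym_def trans_def Id_on_def by blast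

definition class_rep :: "('a \<times> 'a) set \<Rightarrow> 'a \<Rightarrow> 'a" where
  "class_rep r a = (SOME b. b \<in> r `` {a})"

lemma class_rep_related:
  assumes "equiv A r" and "a \<in> A"
  shows "(a, class_rep r a) \<in> r"
proof -
  have "a \<in> r `` {a}"
    using assms by (rule equiv_class_self)
  then have "class_rep r a \<in> r `` {a}"
    unfolding class_rep_def by (rule someI)
  then show ?thesis
    by simp
qed

lemma class_rep_in: "equiv A r \<Longrightarrow> a \<in> A \<Longrightarrow> class_rep r a \<in> A"
  using class_rep_related[of A r a] equiv_type[of A r] by blast

lemma class_rep_eq: "equiv A r \<Longrightarrow> (a, b) \<in> r \<Longrightarrow> class_rep r a = class_rep r b"
  unfolding class_rep_def by (simp add: equiv_class_eq)

lemma class_rep_eq_iff: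
  assumes "equiv A r" and "a \<in> A" and "b \<in> A"
  shows "class_rep r a = class_rep r b \<longleftrightarrow> (a, b) \<in> r"
  using assms class_rep_eq class_rep_related
  by (metis equiv_def symE transE)

lemma class_rep_idem: "equiv A r \<Longrightarrow> a \<in> A \<Longrightarrow> class_rep r (class_rep r a) = class_rep r a"
  using class_rep_related class_rep_eq by metis

subsection \<open>The assembly of classes\<close>

lemma is_Qobj_equiv: "is_Qobj X \<Longrightarrow> equiv (fst (fst X)) (snd X)"
  by (simp add: is_Qobj_def PG_equiv_iff_equiv)

lemma is_Qobj_asm: "is_Qobj X \<Longrightarrow> is_asm (fst X)"
  by (simp add: is_Qobj_def is_pasm_def)

lemma asm_realizer_in_carrier: "is_asm A \<Longrightarrow> (x, n) \<in> snd A \<Longrightarrow> x \<in> fst A"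
  unfolding is_asm_def by blast

lemma asm_ex_realizer: "is_asm A \<Longrightarrow> x \<in> fst A \<Longrightarrow> \<exists>n. (x, n) \<in> snd A"
  unfolding is_asm_def by blast

lemma Q_arrow_carrier: "Q_arrow X Y f \<Longrightarrow> a \<in> fst (fst X) \<Longrightarrow> f a \<in> fst (fst Y)"
  unfolding Q_arrow_def asm_hom_def by blast

lemma Q_arrow_rel: "Q_arrow X Y f \<Longrightarrow> (a, a') \<in> snd X \<Longrightarrow> (f a, f a') \<in> snd Y"
  unfolding Q_arrow_def by blast

definition Q_asm :: "'a qobj \<Rightarrow> 'a asm" where
  "Q_asm X = (class_rep (snd X) ` fst (fst X),
              {(class_rep (snd X) a, n) | a n. (a, n) \<in> snd (fst X)})"

definition Q_map :: "'b qobj \<Rightarrow> ('a \<Rightarrow> 'b) \<Rightarrow> 'a \<Rightarrow> 'b" where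
  "Q_map Y f = class_rep (snd Y) \<circ> f"

lemma fst_Q_asm: "fst (Q_asm X) = class_rep (snd X) ` fst (fst X)"
  by (simp add: Q_asm_def)

lemma snd_Q_asm_iff:
  "(y, n) \<in> snd (Q_asm X) \<longleftrightarrow> (\<exists>a. y = class_rep (snd X) a \<and> (a, n) \<in> snd (fst X))"
  by (auto simp: Q_asm_def)

lemma is_asm_Q_asm: "is_asm (fst X) \<Longrightarrow> is_asm (Q_asm X)"
  unfolding is_asm_def Q_asm_def by fastforce

lemma Q_map_class_rep:
  assumes "equiv (fst (fst X)) (snd X)" and "equiv (fst (fst Y)) (snd Y)"
    and "Q_arrow X Y f" and "a \<in> fst (fst X)"
  shows "Q_map Y f (class_rep (snd X) a) = class_rep (snd Y) (f a)"
proof -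
  have "(f a, f (class_rep (snd X) a)) \<in> snd Y"
    using Q_arrow_rel[OF assms(3) class_rep_related[OF assms(1,4)]] .
  then show ?thesis
    by (simp add: Q_map_def class_rep_eq[OF assms(2)])
qed

lemma asm_hom_Q_map:
  assumes X: "is_asm (fst X)" "equiv (fst (fst X)) (snd X)"
    and Y: "equiv (fst (fst Y)) (snd Y)" and f: "Q_arrow X Y f"
  shows "asm_hom (Q_asm X) (Q_asm Y) (Q_map Y f)"
proof -
  obtain t where t: "tracks (fst X) (fst Y) f t"
    using f unfolding Q_arrow_def asm_hom_def by blast
  have "tracks (Q_asm X) (Q_asm Y) (Q_map Y f) t"
    unfolding tracks_def
  proof (intro allI impI)
    fix y n
    assume "(y, n) \<in> snd (Q_asm X)"
    then obtain a where y: "y = class_rep (snd X) a" and an: "(a, n) \<in> snd (fst X)"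
      by (auto simp: snd_Q_asm_iff)
    obtain m where m: "phi t n = Some m" "(f a, m) \<in> snd (fst Y)"
      using t an unfolding tracks_def by blast
    have "Q_map Y f y = class_rep (snd Y) (f a)"
      using Q_map_class_rep[OF X(2) Y f asm_realizer_in_carrier[OF X(1) an]] y by simp
    then show "\<exists>m. phi t n = Some m \<and> (Q_map Y f y, m) \<in> snd (Q_asm Y)"
      using m by (auto simp: snd_Q_asm_iff)
  qed
  moreover have "Q_map Y f y \<in> fst (Q_asm Y)" if "y \<in> fst (Q_asm X)" for y
    using that Q_map_class_rep[OF X(2) Y f] Q_arrow_carrier[OF f] by (auto simp: fst_Q_asm)
  ultimately show ?thesis
    unfolding asm_hom_def by blast
qed

lemma Q_eq_imp_hom_eq:
  assumes X: "equiv (fst (fst X)) (snd X)" and Y: "equiv (fst (fst Y)) (snd Y)"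
    and "Q_eq X Y f g"
  shows "hom_eq (Q_asm X) (Q_map Y f) (Q_map Y g)"
  unfolding hom_eq_def fst_Q_asm
proof
  fix x
  assume "x \<in> class_rep (snd X) ` fst (fst X)"
  then have "x \<in> fst (fst X)"
    using class_rep_in[OF X] by blast
  then have "(x, x) \<in> snd X"
    using X unfolding equiv_def refl_on_def by blast
  then have "(f x, g x) \<in> snd Y"
    using \<open>Q_eq X Y f g\<close> unfolding Q_eq_def by blast
  then show "Q_map Y f x = Q_map Y g x"
    by (simp add: Q_map_def class_rep_eq[OF Y])
qed

lemma Q_map_id:
  assumes "equiv (fst (fst X)) (snd X)"
  shows "hom_eq (Q_asm X) (Q_map X id) id"
  using class_rep_idem[OF assms] by (auto simp: hom_eq_def fst_Q_asm Q_map_def)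

lemma Q_map_comp:
  assumes X: "equiv (fst (fst X)) (snd X)" and Y: "equiv (fst (fst Y)) (snd Y)"
    and Z: "equiv (fst (fst Z)) (snd Z)" and f: "Q_arrow X Y f" and g: "Q_arrow Y Z g"
  shows "hom_eq (Q_asm X) (Q_map Z (g \<circ> f)) (Q_map Z g \<circ> Q_map Y f)"
  unfolding hom_eq_def fst_Q_asm
proof
  fix x
  assume "x \<in> class_rep (snd X) ` fst (fst X)"
  then have "f x \<in> fst (fst Y)"
    using class_rep_in[OF X] Q_arrow_carrier[OF f] by blast
  then show "Q_map Z (g \<circ> f) x = (Q_map Z g \<circ> Q_map Y f) x"
    using Q_map_class_rep[OF Y Z g] by (simp add: Q_map_def)
qed

lemma hom_eq_imp_Q_eq:
  assumes X: "equiv (fst (fst X)) (snd X)" and Y: "equiv (fst (fst Y)) (snd Y)"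
    and f: "Q_arrow X Y f" and g: "Q_arrow X Y g"
    and fg: "hom_eq (Q_asm X) (Q_map Y f) (Q_map Y g)"
  shows "Q_eq X Y f g"
  unfolding Q_eq_def
proof (intro allI impI)
  fix a a'
  assume aa': "(a, a') \<in> snd X"
  then have a: "a \<in> fst (fst X)"
    using equiv_type[OF X] by blast
  have "class_rep (snd Y) (f a) = class_rep (snd Y) (g a)"
    using fg a Q_map_class_rep[OF X Y f a] Q_map_class_rep[OF X Y g a]
    by (simp add: hom_eq_def fst_Q_asm)
  then have "(f a, g a) \<in> snd Y"
    using class_rep_eq_iff[OF Y Q_arrow_carrier[OF f a] Q_arrow_carrier[OF g a]] by blast
  moreover have "(g a, g a') \<in> snd Y"
    using Q_arrow_rel[OF g aa'] .
  ultimately show "(f a, g a') \<in> snd Y"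
    using Y by (metis equiv_def transE)
qed

lemma Q_asm_hom_lift_pointwise:
  assumes X: "is_pasm (fst X)" and Y: "is_asm (fst Y)"
    and t: "tracks (Q_asm X) (Q_asm Y) h t" and a: "a \<in> fst (fst X)"
  shows "\<exists>b. b \<in> fst (fst Y) \<and> class_rep (snd Y) b = h (class_rep (snd X) a)
           \<and> (\<forall>n. (a, n) \<in> snd (fst X) \<longrightarrow> (\<exists>m. phi t n = Some m \<and> (b, m) \<in> snd (fst Y)))"
proof -
  obtain n where n: "(a, n) \<in> snd (fst X)" and n_unique: "\<And>n'. (a, n') \<in> snd (fst X) \<Longrightarrow> n' = n"
    using X a unfolding is_pasm_def by blast
  have "(class_rep (snd X) a, n) \<in> snd (Q_asm X)"
    using n by (auto simp: snd_Q_asm_iff)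
  then obtain m where m: "phi t n = Some m" "(h (class_rep (snd X) a), m) \<in> snd (Q_asm Y)"
    using t unfolding tracks_def by blast
  then obtain b where b: "h (class_rep (snd X) a) = class_rep (snd Y) b" "(b, m) \<in> snd (fst Y)"
    by (auto simp: snd_Q_asm_iff)
  have "\<exists>m. phi t n' = Some m \<and> (b, m) \<in> snd (fst Y)" if "(a, n') \<in> snd (fst X)" for n'
    using m b(2) n_unique[OF that] by blast
  then show ?thesis
    using asm_realizer_in_carrier[OF Y b(2)] b(1) by (intro exI[of _ b]) simp
qed

lemma Q_asm_full:
  assumes X: "is_pasm (fst X)" "equiv (fst (fst X)) (snd X)"
    and Y: "is_asm (fst Y)" "equiv (fst (fst Y)) (snd Y)"
    and h: "asm_hom (Q_asm X) (Q_asm Y) h"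
  shows "\<exists>f. Q_arrow X Y f \<and> hom_eq (Q_asm X) (Q_map Y f) h"
proof -
  obtain t where t: "tracks (Q_asm X) (Q_asm Y) h t"
    using h unfolding asm_hom_def by blast
  define lift where "lift a = (SOME b. b \<in> fst (fst Y) \<and> class_rep (snd Y) b = h (class_rep (snd X) a)
           \<and> (\<forall>n. (a, n) \<in> snd (fst X) \<longrightarrow> (\<exists>m. phi t n = Some m \<and> (b, m) \<in> snd (fst Y))))" for a
  have lift: "lift a \<in> fst (fst Y)" "class_rep (snd Y) (lift a) = h (class_rep (snd X) a)"
    "\<And>n. (a, n) \<in> snd (fst X) \<Longrightarrow> \<exists>m. phi t n = Some m \<and> (lift a, m) \<in> snd (fst Y)"
    if "a \<in> fst (fst X)" for a
    using someI_ex[OF Q_asm_hom_lift_pointwise[OF X(1) Y(1) t that]] unfolding lift_def by blast+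
  have X_asm: "is_asm (fst X)"
    using X(1) by (simp add: is_pasm_def)
  have "tracks (fst X) (fst Y) lift t"
    unfolding tracks_def using lift(3) asm_realizer_in_carrier[OF X_asm] by blast
  moreover have "(lift a, lift a') \<in> snd Y" if "(a, a') \<in> snd X" for a a'
  proof -
    have a: "a \<in> fst (fst X)" and a': "a' \<in> fst (fst X)"
      using that equiv_type[OF X(2)] by blast+
    then have "class_rep (snd Y) (lift a) = class_rep (snd Y) (lift a')"
      using lift(2) class_rep_eq[OF X(2) that] by simp
    then show ?thesis
      using class_rep_eq_iff[OF Y(2) lift(1)[OF a] lift(1)[OF a']] by blast
  qed
  ultimately have "Q_arrow X Y lift"
    unfolding Q_arrow_def asm_hom_def using lift(1) by blast
  moreover have "hom_eq (Q_asm X) (Q_map Y lift) h"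
    using lift(2) class_rep_in[OF X(2)] class_rep_idem[OF X(2)]
    by (auto simp: hom_eq_def fst_Q_asm Q_map_def)
  ultimately show ?thesis
    by blast
qed

subsection \<open>Descent data as strong subobjects\<close>

lemma class_rep_in_image_Qbar_iff:
  assumes X: "equiv (fst (fst X)) (snd X)" and \<alpha>: "\<alpha> \<in> Qbar X" and a: "a \<in> fst (fst X)"
  shows "class_rep (snd X) a \<in> class_rep (snd X) ` \<alpha> \<longleftrightarrow> a \<in> \<alpha>"
proof
  assume "class_rep (snd X) a \<in> class_rep (snd X) ` \<alpha>"
  then obtain b where b: "b \<in> \<alpha>" "class_rep (snd X) b = class_rep (snd X) a"
    by auto
  moreover have "b \<in> fst (fst X)"
    using \<alpha> b(1) by (auto simp: Qbar_def PG_def)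
  ultimately have "(b, a) \<in> snd X"
    using class_rep_eq_iff[OF X _ a] by blast
  then show "a \<in> \<alpha>"
    using \<alpha> b(1) by (auto simp: Qbar_def)
qed blast

lemma image_class_rep_Qbar_subset_iff:
  assumes X: "equiv (fst (fst X)) (snd X)" and "\<alpha> \<in> Qbar X" and \<beta>: "\<beta> \<in> Qbar X"
  shows "class_rep (snd X) ` \<alpha> \<subseteq> class_rep (snd X) ` \<beta> \<longleftrightarrow> \<alpha> \<subseteq> \<beta>"
proof
  assume sub: "class_rep (snd X) ` \<alpha> \<subseteq> class_rep (snd X) ` \<beta>"
  show "\<alpha> \<subseteq> \<beta>"
  proof
    fix a
    assume "a \<in> \<alpha>"
    then have "a \<in> fst (fst X)"
      using \<open>\<alpha> \<in> Qbar X\<close> by (auto simp: Qbar_def PG_def)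
    moreover have "class_rep (snd X) a \<in> class_rep (snd X) ` \<beta>"
      using sub \<open>a \<in> \<alpha>\<close> by blast
    ultimately show "a \<in> \<beta>"
      using class_rep_in_image_Qbar_iff[OF X \<beta>] by blast
  qed
qed blast

lemma bij_betw_image_class_rep_Qbar:
  assumes X: "equiv (fst (fst X)) (snd X)"
  shows "bij_betw ((`) (class_rep (snd X))) (Qbar X) (Ssb (Q_asm X))"
proof (rule bij_betw_imageI)
  show "inj_on ((`) (class_rep (snd X))) (Qbar X)"
    by (rule inj_onI) (simp add: set_eq_subset image_class_rep_Qbar_subset_iff[OF X])
  show "(`) (class_rep (snd X)) ` Qbar X = Ssb (Q_asm X)"
  proof (rule equalityI[OF image_subsetI subsetI])
    fix \<alpha>
    assume "\<alpha> \<in> Qbar X"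
    then show "class_rep (snd X) ` \<alpha> \<in> Ssb (Q_asm X)"
      by (auto simp: Qbar_def PG_def Ssb_def fst_Q_asm)
  next
    fix S
    assume "S \<in> Ssb (Q_asm X)"
    then have S: "S \<subseteq> class_rep (snd X) ` fst (fst X)"
      by (simp add: Ssb_def fst_Q_asm)
    let ?\<alpha> = "{a \<in> fst (fst X). class_rep (snd X) a \<in> S}"
    have "?\<alpha> \<in> Qbar X"
      unfolding Qbar_def PG_def
    proof (rule CollectI, intro conjI allI impI)
      show "?\<alpha> \<in> Pow (fst (fst X))"
        by blast
    next
      fix a a'
      assume "a \<in> ?\<alpha> \<and> (a, a') \<in> snd X"
      then have "a \<in> ?\<alpha>" and aa': "(a, a') \<in> snd X"
        by blast+
      have "a' \<in> fst (fst X)"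
        using aa' equiv_type[OF X] by blast
      moreover have "class_rep (snd X) a' = class_rep (snd X) a"
        using class_rep_eq[OF X aa'] by simp
      ultimately show "a' \<in> ?\<alpha>"
        using \<open>a \<in> ?\<alpha>\<close> by simp
    qed
    moreover have "class_rep (snd X) ` ?\<alpha> = S"
    proof (rule equalityI[OF _ subsetI])
      show "class_rep (snd X) ` ?\<alpha> \<subseteq> S"
        by blast
    next
      fix s
      assume "s \<in> S"
      then obtain a where a: "a \<in> fst (fst X)" "s = class_rep (snd X) a"
        using S by blast
      then have "s \<in> ?\<alpha>" and "s = class_rep (snd X) s"
        using \<open>s \<in> S\<close> class_rep_in[OF X a(1)] class_rep_idem[OF X a(1)] by simp_all
      then show "s \<in> class_rep (snd X) ` ?\<alpha>"
        by (rule rev_image_eqI)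
    qed
    ultimately show "S \<in> (`) (class_rep (snd X)) ` Qbar X"
      by (rule rev_image_eqI[OF _ sym])
  qed
qed

lemma image_class_rep_Qbar_reindex:
  assumes X: "equiv (fst (fst X)) (snd X)" and Y: "equiv (fst (fst Y)) (snd Y)"
    and f: "Q_arrow X Y f" and \<alpha>: "\<alpha> \<in> Qbar Y"
  shows "class_rep (snd X) ` Qbar_reindex X f \<alpha>
           = Ssb_reindex (Q_asm X) (Q_map Y f) (class_rep (snd Y) ` \<alpha>)"
proof -
  have "Q_map Y f (class_rep (snd X) a) \<in> class_rep (snd Y) ` \<alpha> \<longleftrightarrow> f a \<in> \<alpha>"
    if "a \<in> fst (fst X)" for a
    using Q_map_class_rep[OF X Y f that] class_rep_in_image_Qbar_iff[OF Y \<alpha>]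
      Q_arrow_carrier[OF f that] by simp
  then show ?thesis
    unfolding Qbar_reindex_def PG_reindex_def Ssb_reindex_def fst_Q_asm by blast
qed

subsection \<open>Every assembly is a quotient of a partitioned one\<close>

unbundle cardinal_syntax

lemma infinite_UNIV_ex_inj_prod_nat:
  assumes "infinite (UNIV :: 'a set)"
  shows "\<exists>e :: 'a \<times> nat \<Rightarrow> 'a. inj e"
proof -
  have "|UNIV :: nat set| \<le>o |UNIV :: 'a set|"
    using assms infinite_iff_card_of_nat by blast
  then have "|(UNIV :: 'a set) \<times> (UNIV :: nat set)| \<le>o |UNIV :: 'a set|"
    using assms card_of_Times_infinite_simps(1) ordIso_iff_ordLeq by blast
  then show ?thesis
    unfolding card_of_ordLeq[symmetric] by auto
qed

definition graph_Qobj :: "('b \<times> nat \<Rightarrow> 'a) \<Rightarrow> 'b asm \<Rightarrow> 'a qobj" where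
  "graph_Qobj e B = ((e ` snd B, {(e p, snd p) | p. p \<in> snd B}),
                     {(e p, e q) | p q. p \<in> snd B \<and> q \<in> snd B \<and> fst p = fst q})"

lemma is_Qobj_graph_Qobj:
  assumes e: "inj e"
  shows "is_Qobj (graph_Qobj e B)"
proof -
  have "is_pasm (fst (graph_Qobj e B))"
    using e by (auto simp: is_pasm_def is_asm_def graph_Qobj_def inj_eq)
  moreover have "equiv (fst (fst (graph_Qobj e B))) (snd (graph_Qobj e B))"
    using e by (auto simp: equiv_def refl_on_def sym_def trans_def graph_Qobj_def inj_eq)
  ultimately show ?thesis
    by (simp add: is_Qobj_def PG_equiv_iff_equiv)
qed

lemma graph_Qobj_class_rep:
  assumes e: "inj e" and p: "p \<in> snd B"
  shows "\<exists>q. class_rep (snd (graph_Qobj e B)) (e p) = e q \<and> q \<in> snd B \<and> fst q = fst p"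
proof -
  have "(e p, class_rep (snd (graph_Qobj e B)) (e p)) \<in> snd (graph_Qobj e B)"
    using class_rep_related[OF is_Qobj_equiv[OF is_Qobj_graph_Qobj[OF e]]] p
    by (simp add: graph_Qobj_def)
  then show ?thesis
    using e by (auto simp: graph_Qobj_def inj_eq)
qed

lemma asm_iso_Q_asm_graph_Qobj:
  assumes e: "inj e" and B: "is_asm B"
  shows "\<exists>k l. asm_hom (Q_asm (graph_Qobj e B)) B k \<and> asm_hom B (Q_asm (graph_Qobj e B)) l
           \<and> hom_eq (Q_asm (graph_Qobj e B)) (l \<circ> k) id \<and> hom_eq B (k \<circ> l) id"
proof -
  let ?G = "graph_Qobj e B" and ?rep = "class_rep (snd (graph_Qobj e B))"
  have G: "equiv (fst (fst ?G)) (snd ?G)"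
    using is_Qobj_equiv[OF is_Qobj_graph_Qobj[OF e]] .
  define k where "k y = fst (inv e y)" for y
  define l where "l x = ?rep (e (x, SOME n. (x, n) \<in> snd B))" for x
  have k: "k (?rep (e p)) = fst p" if "p \<in> snd B" for p
    using graph_Qobj_class_rep[OF e that] e unfolding k_def by auto
  have l: "l x = ?rep (e (x, n))" if "(x, n) \<in> snd B" for x n
    using that someI[of "\<lambda>n. (x, n) \<in> snd B"] class_rep_eq[OF G]
    unfolding l_def graph_Qobj_def by fastforce
  have carrier: "fst (Q_asm ?G) = ?rep ` e ` snd B"
    by (simp add: fst_Q_asm graph_Qobj_def)
  have realizer_iff: "(y, n) \<in> snd (Q_asm ?G) \<longleftrightarrow> (\<exists>x. y = ?rep (e (x, n)) \<and> (x, n) \<in> snd B)" for y n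
    by (force simp: snd_Q_asm_iff graph_Qobj_def)
  have "asm_hom (Q_asm ?G) B k"
    unfolding asm_hom_def
  proof (intro conjI ballI exI[of _ "to_nat (Proj 0)"] tracks_Proj0)
    show "k y \<in> fst B" if "y \<in> fst (Q_asm ?G)" for y
      using that k asm_realizer_in_carrier[OF B] by (auto simp: carrier)
    show "(k y, n) \<in> snd B" if "(y, n) \<in> snd (Q_asm ?G)" for y n
      using that k by (auto simp: realizer_iff)
  qed
  moreover have "asm_hom B (Q_asm ?G) l"
    unfolding asm_hom_def
  proof (intro conjI ballI exI[of _ "to_nat (Proj 0)"] tracks_Proj0)
    show "l x \<in> fst (Q_asm ?G)" if "x \<in> fst B" for x
      using that l asm_ex_realizer[OF B] by (fastforce simp: carrier)
    show "(l x, n) \<in> snd (Q_asm ?G)" if "(x, n) \<in> snd B" for x n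
      using that l by (auto simp: realizer_iff)
  qed
  moreover have "hom_eq (Q_asm ?G) (l \<circ> k) id"
    using k l by (auto simp: hom_eq_def carrier)
  moreover have "hom_eq B (k \<circ> l) id"
    using k l asm_ex_realizer[OF B] by (fastforce simp: hom_eq_def)
  ultimately show ?thesis
    by blast
qed

lemma ex_Qobj_asm_iso:
  fixes B :: "'a asm"
  assumes "infinite (UNIV :: 'a set)" and "is_asm B"
  shows "\<exists>(X :: 'a qobj) k l. is_Qobj X \<and> asm_hom (Q_asm X) B k \<and> asm_hom B (Q_asm X) l
           \<and> hom_eq (Q_asm X) (l \<circ> k) id \<and> hom_eq B (k \<circ> l) id"
proof -
  obtain e :: "'a \<times> nat \<Rightarrow> 'a" where e: "inj e"
    using infinite_UNIV_ex_inj_prod_nat[OF assms(1)] by blast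
  show ?thesis
    using is_Qobj_graph_Qobj[OF e] asm_iso_Q_asm_graph_Qobj[OF e assms(2)] by blast
qed

theorem theorem4p3:
  assumes "infinite (UNIV :: 'a set)"
  shows "\<exists>(F0 :: 'a qobj \<Rightarrow> 'a asm) (F1 :: 'a qobj \<Rightarrow> 'a qobj \<Rightarrow> ('a \<Rightarrow> 'a) \<Rightarrow> ('a \<Rightarrow> 'a))
           (b :: 'a qobj \<Rightarrow> 'a set \<Rightarrow> 'a set).
     \<comment> \<open>F is a functor Q_{PGamma} \<rightarrow> Asm\<close>
     (\<forall>X. is_Qobj X \<longrightarrow> is_asm (F0 X))
   \<and> (\<forall>X Y f. is_Qobj X \<and> is_Qobj Y \<and> Q_arrow X Y f \<longrightarrow> asm_hom (F0 X) (F0 Y) (F1 X Y f))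
   \<and> (\<forall>X Y f g. is_Qobj X \<and> is_Qobj Y \<and> Q_arrow X Y f \<and> Q_arrow X Y g \<and> Q_eq X Y f g
        \<longrightarrow> hom_eq (F0 X) (F1 X Y f) (F1 X Y g))
   \<and> (\<forall>X. is_Qobj X \<longrightarrow> hom_eq (F0 X) (F1 X X id) id)
   \<and> (\<forall>X Y Z f g. is_Qobj X \<and> is_Qobj Y \<and> is_Qobj Z \<and> Q_arrow X Y f \<and> Q_arrow Y Z g
        \<longrightarrow> hom_eq (F0 X) (F1 X Z (g \<circ> f)) (F1 Y Z g \<circ> F1 X Y f))
     \<comment> \<open>F is faithful, full and essentially surjective\<close>
   \<and> (\<forall>X Y f g. is_Qobj X \<and> is_Qobj Y \<and> Q_arrow X Y f \<and> Q_arrow X Y g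
        \<and> hom_eq (F0 X) (F1 X Y f) (F1 X Y g) \<longrightarrow> Q_eq X Y f g)
   \<and> (\<forall>X Y h. is_Qobj X \<and> is_Qobj Y \<and> asm_hom (F0 X) (F0 Y) h
        \<longrightarrow> (\<exists>f. Q_arrow X Y f \<and> hom_eq (F0 X) (F1 X Y f) h))
   \<and> (\<forall>B :: 'a asm. is_asm B \<longrightarrow> (\<exists>X k l. is_Qobj X \<and> asm_hom (F0 X) B k \<and> asm_hom B (F0 X) l
        \<and> hom_eq (F0 X) (l \<circ> k) id \<and> hom_eq B (k \<circ> l) id))
     \<comment> \<open>b is a natural isomorphism Qbar(PGamma) \<cong> Ssb \<circ> F\<close>
   \<and> (\<forall>X. is_Qobj X \<longrightarrow> bij_betw (b X) (Qbar X) (Ssb (F0 X))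
        \<and> (\<forall>\<alpha>\<in>Qbar X. \<forall>\<beta>\<in>Qbar X. \<alpha> \<subseteq> \<beta> \<longleftrightarrow> b X \<alpha> \<subseteq> b X \<beta>))
   \<and> (\<forall>X Y f \<alpha>. is_Qobj X \<and> is_Qobj Y \<and> Q_arrow X Y f \<and> \<alpha> \<in> Qbar Y
        \<longrightarrow> b X (Qbar_reindex X f \<alpha>) = Ssb_reindex (F0 X) (F1 X Y f) (b Y \<alpha>))"
proof -
  have is_Qobj_pasm: "is_Qobj X \<Longrightarrow> is_pasm (fst X)" for X :: "'a qobj"
    by (simp add: is_Qobj_def)
  show ?thesis
    apply (rule exI[of _ Q_asm], rule exI[of _ "\<lambda>X. Q_map"],
        rule exI[of _ "\<lambda>X. (`) (class_rep (snd X))"])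
    apply (intro conjI allI impI; (elim conjE)?)
    \<comment> \<open>without \<open>ex_simps\<close> the existential of \<open>ex_Qobj_asm_iso\<close> would be miniscoped and missed\<close>
    by (simp_all add: is_asm_Q_asm is_Qobj_asm is_Qobj_pasm is_Qobj_equiv asm_hom_Q_map
        Q_eq_imp_hom_eq Q_map_id Q_map_comp hom_eq_imp_Q_eq Q_asm_full ex_Qobj_asm_iso[OF assms]
        bij_betw_image_class_rep_Qbar image_class_rep_Qbar_subset_iff image_class_rep_Qbar_reindex
        del: ex_simps split_paired_Ex)
qed

end
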